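(* Let $n \ge 2$ be an integer, $\lambda > 0$ a real number, $C \ge 1$ and $m$ a positive integer with $m \le n+1$. There exists a constant $C'>0$ depending only on $n$, $m$ and $C$ such that the following holds. Let $(p_0,\ldots,p_n) \in \mathbb{Z}^{n+1}$ with $q := p_0 \ge 1$, $C^{-1} q \le |p_i| \le C q$ for all $i$, and $|p_{i-1}p_{i+1} - p_i^2| \le C q^{1-\lambda}$ for all $i \in \{1,\ldots,n-1\}$. For $i = 0,\ldots,n-m+1$ let $\mathbf{y}_i = (p_i, p_{i+1}, \ldots, p_{i+m-1}) \in \mathbb{Z}^m$. Then for any integers $c_1,\ldots,c_m \in \{0,\ldots,n-m+1\}$, the determinant $d(c_1,\ldots,c_m)$ of the $m\times m$ matrix with rows $\mathbf{y}_{c_1},\ldots,\mathbf{y}_{c_m}$ satisfies $|d(c_1,\ldots,c_m)| \le C' q^{1-(m-1)\lambda}$.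
   Context: The paper writes these statements with Vinogradov notation ($\ll$, $\asymp$); here implied constants are made explicit. *)

theory Defs
  imports "Jordan_Normal_Form.Determinant"
begin

end

theory Submission
  imports Defs
begin

(* With r = p_1 / q, the error |p_i - q r^i| vanishes for i = 0, 1 and, by the identity
   x (z - w) = (y - v) (y + v) + (x z - y^2) - (x - u) w  for a geometric triple u, v, w,
   grows by at most a constant factor per step, so it stays O(q^-lam) up to i = n.
   Hence row k of the matrix is within O(q^-lam) of q r^(c_k) (1, r, ..., r^(m-1)).
   Subtracting multiples of the first row leaves one row of size O(q) and m - 1 rows of
   size O(q^-lam), and the Leibniz expansion gives |d| = O(q^(1 - (m-1) lam)). *)

lemma abs_det_le_fact_mult_power:
  fixes A :: "'a :: linordered_idom mat"
  assumes A: "A \<in> carrier_mat m m" and "m \<ge> 1"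
    and row0: "\<And>j. j < m \<Longrightarrow> \<bar>A $$ (0, j)\<bar> \<le> X"
    and rows: "\<And>i j. 0 < i \<Longrightarrow> i < m \<Longrightarrow> j < m \<Longrightarrow> \<bar>A $$ (i, j)\<bar> \<le> Y"
  shows "\<bar>det A\<bar> \<le> fact m * X * Y ^ (m - 1)"
proof -
  let ?P = "{p. p permutes {0..<m}}"
  have X: "X \<ge> 0" using row0[of 0] abs_ge_zero[of "A $$ (0, 0)"] \<open>m \<ge> 1\<close> by force
  have term_bound: "\<bar>signof p * (\<Prod>i = 0..<m. A $$ (i, p i))\<bar> \<le> X * Y ^ (m - 1)"
    if "p permutes {0..<m}" for p
  proof -
    have p: "i < m \<Longrightarrow> p i < m" for i using permutes_in_image[OF that] by auto
    have "\<bar>signof p * (\<Prod>i = 0..<m. A $$ (i, p i))\<bar>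
        = \<bar>A $$ (0, p 0)\<bar> * (\<Prod>i = 1..<m. \<bar>A $$ (i, p i)\<bar>)"
      using \<open>m \<ge> 1\<close> by (simp add: abs_mult abs_prod sign_def prod.atLeast_Suc_lessThan)
    also have "\<dots> \<le> X * (\<Prod>i = 1..<m. Y)"
      using row0 rows p \<open>m \<ge> 1\<close> X
      by (intro mult_mono prod_mono) (auto intro: prod_nonneg)
    finally show ?thesis by simp
  qed
  have "\<bar>det A\<bar> \<le> (\<Sum>p\<in>?P. \<bar>signof p * (\<Prod>i = 0..<m. A $$ (i, p i))\<bar>)"
    unfolding det_def'[OF A] by (rule sum_abs)
  also have "\<dots> \<le> (\<Sum>p\<in>?P. X * Y ^ (m - 1))"
    using term_bound by (intro sum_mono) auto
  also have "\<dots> = fact m * X * Y ^ (m - 1)"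
    using card_permutations[of "{0..<m}" m] by (simp add: of_nat_fact)
  finally show ?thesis .
qed

lemma det_subtract_multiples_of_row0:
  fixes A :: "'a :: comm_ring_1 mat" and s :: "nat \<Rightarrow> 'a"
  assumes A: "A \<in> carrier_mat m m"
  shows "det (mat m m (\<lambda>(i, j). if i = 0 then A $$ (0, j) else A $$ (i, j) - s i * A $$ (0, j)))
       = det A"
proof -
  define L where "L = mat m m (\<lambda>(i, j). if i = j then 1 else if j = 0 then - s i else (0::'a))"
  have L: "L \<in> carrier_mat m m" unfolding L_def by simp
  have "(L * A) $$ (i, j) = (if i = 0 then A $$ (0, j) else A $$ (i, j) - s i * A $$ (0, j))"
    if "i < m" "j < m" for i j
  proof -
    have "(L * A) $$ (i, j) = (\<Sum>l = 0..<m. (if i = l then 1 else if l = 0 then - s i else 0) * A $$ (l, j))"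
      using that A unfolding L_def by (simp add: scalar_prod_def)
    also have "\<dots> = (\<Sum>l = 0..<m. (if l = i then A $$ (l, j) else 0)
                      + (if l = 0 \<and> i \<noteq> 0 then - s i * A $$ (0, j) else 0))"
      by (rule sum.cong) auto
    also have "\<dots> = (if i = 0 then A $$ (0, j) else A $$ (i, j) - s i * A $$ (0, j))"
      using that by (simp add: sum.distrib)
    finally show ?thesis .
  qed
  then have "L * A = mat m m (\<lambda>(i, j). if i = 0 then A $$ (0, j) else A $$ (i, j) - s i * A $$ (0, j))"
    using A L by (intro eq_matI) auto
  moreover have "det L = 1"
  proof -
    have "det L = prod_list (diag_mat L)"
      by (rule det_lower_triangular[OF _ L]) (auto simp: L_def)
    also have "diag_mat L = replicate m 1" unfolding diag_mat_def L_def by (simp add: list_eq_iff_nth_eq)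
    finally show ?thesis by simp
  qed
  ultimately show ?thesis using det_mult[OF L A] by simp
qed

lemma abs_det_near_rank_one:
  fixes A :: "'a :: linordered_field mat"
  assumes A: "A \<in> carrier_mat m m" and "m \<ge> 1"
    and near: "\<And>i j. i < m \<Longrightarrow> j < m \<Longrightarrow> \<bar>A $$ (i, j) - s i * v j\<bar> \<le> D"
    and row0: "\<And>j. j < m \<Longrightarrow> \<bar>A $$ (0, j)\<bar> \<le> X"
    and "s 0 \<noteq> 0" and ratio: "\<And>i. i < m \<Longrightarrow> \<bar>s i / s 0\<bar> \<le> R"
  shows "\<bar>det A\<bar> \<le> fact m * X * ((1 + R) * D) ^ (m - 1)"
proof -
  define B where "B = mat m m (\<lambda>(i, j).
    if i = 0 then A $$ (0, j) else A $$ (i, j) - s i / s 0 * A $$ (0, j))"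
  have "\<bar>B $$ (i, j)\<bar> \<le> (1 + R) * D" if "0 < i" "i < m" "j < m" for i j
  proof -
    have "B $$ (i, j) = (A $$ (i, j) - s i * v j) - s i / s 0 * (A $$ (0, j) - s 0 * v j)"
      using that \<open>s 0 \<noteq> 0\<close> unfolding B_def by (simp add: algebra_simps)
    also have "\<bar>\<dots>\<bar> \<le> \<bar>A $$ (i, j) - s i * v j\<bar> + \<bar>s i / s 0\<bar> * \<bar>A $$ (0, j) - s 0 * v j\<bar>"
      by (metis abs_mult abs_triangle_ineq4)
    also have "\<dots> \<le> D + R * D"
      using near[OF \<open>i < m\<close> \<open>j < m\<close>] near[of 0 j] ratio[OF \<open>i < m\<close>] that
      by (intro add_mono mult_mono') auto
    finally show ?thesis by (simp add: algebra_simps)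
  qed
  then have "\<bar>det B\<bar> \<le> fact m * X * ((1 + R) * D) ^ (m - 1)"
    using \<open>m \<ge> 1\<close> row0 by (intro abs_det_le_fact_mult_power) (auto simp: B_def)
  moreover have "det B = det A"
    unfolding B_def by (rule det_subtract_multiples_of_row0[OF A])
  ultimately show ?thesis by simp
qed

lemma geometric_error_recurrence:
  fixes x y z u v w q C K e :: real
  assumes "v\<^sup>2 = u * w" and "q > 0" and "C > 0" and "q / C \<le> \<bar>x\<bar>"
    and "\<bar>y + v\<bar> \<le> K * q" and "\<bar>w\<bar> \<le> K * q" and "\<bar>x * z - y\<^sup>2\<bar> \<le> C * q * e"
  shows "\<bar>z - w\<bar> \<le> C * (K * \<bar>y - v\<bar> + C * e + K * \<bar>x - u\<bar>)"
proof -
  have "x * (z - w) = (y - v) * (y + v) + (x * z - y\<^sup>2) - (x - u) * w"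
    using \<open>v\<^sup>2 = u * w\<close> by (simp add: algebra_simps power2_eq_square)
  then have "\<bar>x\<bar> * \<bar>z - w\<bar> \<le> \<bar>y - v\<bar> * \<bar>y + v\<bar> + \<bar>x * z - y\<^sup>2\<bar> + \<bar>x - u\<bar> * \<bar>w\<bar>"
    unfolding abs_mult[symmetric] by arith
  also have "\<dots> \<le> \<bar>y - v\<bar> * (K * q) + C * q * e + \<bar>x - u\<bar> * (K * q)"
    using assms by (intro add_mono mult_left_mono) auto
  finally have "\<bar>x\<bar> * \<bar>z - w\<bar> \<le> q * (K * \<bar>y - v\<bar> + C * e + K * \<bar>x - u\<bar>)"
    by (simp add: algebra_simps)
  moreover have "q / C * \<bar>z - w\<bar> \<le> \<bar>x\<bar> * \<bar>z - w\<bar>"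
    using \<open>q / C \<le> \<bar>x\<bar>\<close> by (rule mult_right_mono) simp
  ultimately have "q / C * \<bar>z - w\<bar> \<le> q * (K * \<bar>y - v\<bar> + C * e + K * \<bar>x - u\<bar>)"
    by linarith
  then have "q * \<bar>z - w\<bar> \<le> q * (C * (K * \<bar>y - v\<bar> + C * e + K * \<bar>x - u\<bar>))"
    using \<open>C > 0\<close> mult_left_mono[of _ _ C] by (fastforce simp: field_simps)
  then show ?thesis
    using \<open>q > 0\<close> by (rule mult_left_le_imp_le)
qed

lemma two_step_recurrence_le_power:
  fixes a :: "nat \<Rightarrow> real" and \<alpha> \<beta> G e :: real
  assumes "a 0 \<le> e" and "a 1 \<le> G * e" and "e \<ge> 0" and "G \<ge> 1"
    and "\<alpha> \<ge> 0" and "\<beta> \<ge> 0" and "2 * \<alpha> + \<beta> \<le> G"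
    and step: "\<And>k. k + 2 \<le> n \<Longrightarrow> a (k + 2) \<le> \<alpha> * a (k + 1) + \<beta> * e + \<alpha> * a k"
    and "i \<le> n"
  shows "a i \<le> G ^ i * e"
  using \<open>i \<le> n\<close>
proof (induction i rule: less_induct)
  case (less i)
  consider "i = 0" | "i = 1" | k where "i = k + 2"
    by (metis One_nat_def add_2_eq_Suc' not0_implies_Suc)
  then show ?case
  proof cases
    case 3
    have "e \<le> G ^ (k + 1) * e"
      using mult_right_mono[OF one_le_power[OF \<open>G \<ge> 1\<close>, of "k + 1"] \<open>e \<ge> 0\<close>] by simp
    have "G ^ k * e \<le> G ^ (k + 1) * e"
      using \<open>G \<ge> 1\<close> \<open>e \<ge> 0\<close> by (intro mult_right_mono power_increasing) auto
    moreover have "a k \<le> G ^ k * e" and "a (k + 1) \<le> G ^ (k + 1) * e"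
      using less.IH[of k] less.IH[of "k + 1"] less.prems 3 by auto
    ultimately have "a k \<le> G ^ (k + 1) * e" and "a (k + 1) \<le> G ^ (k + 1) * e"
      by auto
    then have "a (k + 2) \<le> \<alpha> * (G ^ (k + 1) * e) + \<beta> * (G ^ (k + 1) * e) + \<alpha> * (G ^ (k + 1) * e)"
      using step[of k] less.prems 3 \<open>e \<le> G ^ (k + 1) * e\<close> \<open>\<alpha> \<ge> 0\<close> \<open>\<beta> \<ge> 0\<close>
      by (smt (verit) mult_left_mono)
    also have "\<dots> = (2 * \<alpha> + \<beta>) * (G ^ (k + 1) * e)"
      by (simp add: algebra_simps)
    also have "\<dots> \<le> G * (G ^ (k + 1) * e)"
      using \<open>2 * \<alpha> + \<beta> \<le> G\<close> \<open>e \<ge> 0\<close> \<open>G \<ge> 1\<close> by (intro mult_right_mono) auto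
    finally show ?thesis using 3 by simp
  qed (use assms in auto)
qed

lemma almost_geometric_near_geometric:
  fixes P :: "nat \<Rightarrow> real" and C e :: real
  assumes "n \<ge> 1" and "C \<ge> 1" and "P 0 > 0" and "e \<ge> 0"
    and bounds: "\<And>i. i \<le> n \<Longrightarrow> P 0 / C \<le> \<bar>P i\<bar> \<and> \<bar>P i\<bar> \<le> C * P 0"
    and near_square: "\<And>i. 0 < i \<Longrightarrow> i < n \<Longrightarrow> \<bar>P (i - 1) * P (i + 1) - (P i)\<^sup>2\<bar> \<le> C * P 0 * e"
    and "i \<le> n"
  shows "\<bar>P i - P 0 * (P 1 / P 0) ^ i\<bar> \<le> (5 * C ^ (n + 1)) ^ i * e"
proof -
  define q where "q = P 0"
  define r where "r = P 1 / q"
  define K where "K = 2 * C ^ n"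
  have "q > 0" "C > 0" using \<open>P 0 > 0\<close> \<open>C \<ge> 1\<close> by (simp_all add: q_def)
  have "\<bar>r\<bar> \<le> C"
    using bounds[of 1] \<open>n \<ge> 1\<close> \<open>q > 0\<close> by (simp add: r_def q_def abs_div pos_divide_le_eq)
  have geometric_le: "\<bar>q * r ^ k\<bar> \<le> C ^ n * q" if "k \<le> n" for k
  proof -
    have "\<bar>q * r ^ k\<bar> \<le> C ^ k * q"
      using \<open>q > 0\<close> \<open>\<bar>r\<bar> \<le> C\<close> by (simp add: abs_mult power_abs power_mono mult.commute)
    also have "\<dots> \<le> C ^ n * q"
      using \<open>q > 0\<close> \<open>C \<ge> 1\<close> that by (simp add: power_increasing)
    finally show ?thesis .
  qed
  have "C \<le> C ^ n"
    using \<open>C \<ge> 1\<close> \<open>n \<ge> 1\<close> power_increasing[of 1 n C] by simp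
  have "\<bar>P (k + 2) - q * r ^ (k + 2)\<bar>
      \<le> (C * K) * \<bar>P (k + 1) - q * r ^ (k + 1)\<bar> + C\<^sup>2 * e + (C * K) * \<bar>P k - q * r ^ k\<bar>"
    if "k + 2 \<le> n" for k
  proof -
    have "(q * r ^ (k + 1))\<^sup>2 = (q * r ^ k) * (q * r ^ (k + 2))"
      by (simp add: power2_eq_square power_add algebra_simps)
    moreover have "\<bar>P (k + 1) + q * r ^ (k + 1)\<bar> \<le> K * q"
    proof -
      have "C * q \<le> C ^ n * q"
        using \<open>C \<le> C ^ n\<close> \<open>q > 0\<close> by simp
      then show ?thesis
        using bounds[of "k + 1"] geometric_le[of "k + 1"] that
          abs_triangle_ineq[of "P (k + 1)" "q * r ^ (k + 1)"]
        by (simp add: K_def q_def)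
    qed
    moreover have "\<bar>P k * P (k + 2) - (P (k + 1))\<^sup>2\<bar> \<le> C * q * e"
      using near_square[of "k + 1"] that by (simp add: q_def)
    ultimately show ?thesis
      using \<open>q > 0\<close> \<open>C > 0\<close> bounds[of k] geometric_le[of "k + 2"] that
        geometric_error_recurrence[of "q * r ^ (k + 1)" "q * r ^ k" "q * r ^ (k + 2)" q C
          "P k" "P (k + 1)" K "P (k + 2)" e]
      by (simp add: q_def K_def algebra_simps power2_eq_square)
  qed
  moreover have "C * K \<ge> 0" "2 * (C * K) + C\<^sup>2 \<le> 5 * C ^ (n + 1)"
    using \<open>C > 0\<close> \<open>C \<le> C ^ n\<close> mult_left_mono[of C "C ^ n" C]
    by (simp_all add: K_def power2_eq_square)
  ultimately show ?thesis
    using \<open>q > 0\<close> \<open>e \<ge> 0\<close> \<open>C \<ge> 1\<close> \<open>i \<le> n\<close> one_le_power[of C "n + 1"]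
    by (intro two_step_recurrence_le_power[where a = "\<lambda>k. \<bar>P k - q * r ^ k\<bar>", unfolded q_def r_def])
      (auto simp: q_def r_def)
qed

lemma abs_det_shifted_rows_le:
  fixes P :: "nat \<Rightarrow> real" and c :: "nat \<Rightarrow> nat" and C e :: real
  assumes "n \<ge> 1" and "C \<ge> 1" and "P 0 > 0" and "e \<ge> 0" and "m \<ge> 1"
    and bounds: "\<And>i. i \<le> n \<Longrightarrow> P 0 / C \<le> \<bar>P i\<bar> \<and> \<bar>P i\<bar> \<le> C * P 0"
    and near_square: "\<And>i. 0 < i \<Longrightarrow> i < n \<Longrightarrow> \<bar>P (i - 1) * P (i + 1) - (P i)\<^sup>2\<bar> \<le> C * P 0 * e"
    and shifts: "\<And>i. i < m \<Longrightarrow> c i + m \<le> n + 1"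
  shows "\<bar>det (mat m m (\<lambda>(i, j). P (c i + j)))\<bar>
       \<le> fact m * C * ((1 + C ^ (2 * n)) * (5 * C ^ (n + 1)) ^ n) ^ (m - 1) * (P 0 * e ^ (m - 1))"
proof -
  define q where "q = P 0"
  define r where "r = P 1 / q"
  define G where "G = 5 * C ^ (n + 1)"
  have "q > 0" using \<open>P 0 > 0\<close> by (simp add: q_def)
  have index: "c i + j \<le> n" if "i < m" "j < m" for i j
    using shifts[OF that(1)] that(2) by linarith
  have "q / C \<le> \<bar>P 1\<bar>" and "\<bar>P 1\<bar> \<le> C * q"
    using bounds[of 1] \<open>n \<ge> 1\<close> by (simp_all add: q_def)
  moreover have "\<bar>P 1\<bar> > 0"
    using \<open>q / C \<le> \<bar>P 1\<bar>\<close> \<open>q > 0\<close> \<open>C \<ge> 1\<close> by (smt (verit) divide_pos_pos)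
  ultimately have r: "\<bar>r\<bar> \<le> C" "\<bar>1 / r\<bar> \<le> C" "r \<noteq> 0"
    using \<open>q > 0\<close> \<open>C \<ge> 1\<close> by (auto simp: r_def abs_div field_simps)
  have "\<bar>P (c i + j) - (q * r ^ c i) * r ^ j\<bar> \<le> G ^ n * e" if "i < m" "j < m" for i j
  proof -
    have "\<bar>P (c i + j) - (q * r ^ c i) * r ^ j\<bar> \<le> G ^ (c i + j) * e"
      using almost_geometric_near_geometric[OF assms(1-4) bounds near_square index[OF that]]
      by (simp add: q_def r_def G_def power_add mult.assoc)
    also have "\<dots> \<le> G ^ n * e"
      using \<open>C \<ge> 1\<close> \<open>e \<ge> 0\<close> index[OF that] one_le_power[of C "n + 1"]
      by (intro mult_right_mono power_increasing) (auto simp: G_def)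
    finally show ?thesis .
  qed
  moreover have "\<bar>P (c 0 + j)\<bar> \<le> C * q" if "j < m" for j
    using bounds index[of 0 j] that \<open>m \<ge> 1\<close> by (simp add: q_def)
  moreover have "\<bar>r ^ c i / r ^ c 0\<bar> \<le> C ^ n * C ^ n" if "i < m" for i
  proof -
    have "\<bar>r ^ c i / r ^ c 0\<bar> = \<bar>r\<bar> ^ c i * \<bar>1 / r\<bar> ^ c 0"
      by (simp add: power_abs power_one_over divide_inverse abs_mult power_inverse)
    also have "\<dots> \<le> C ^ c i * C ^ c 0"
      using r by (intro mult_mono power_mono) auto
    also have "\<dots> \<le> C ^ n * C ^ n"
      using \<open>C \<ge> 1\<close> index[of i 0] index[of 0 0] that \<open>m \<ge> 1\<close>
      by (intro mult_mono power_increasing) auto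
    finally show ?thesis .
  qed
  ultimately have "\<bar>det (mat m m (\<lambda>(i, j). P (c i + j)))\<bar>
      \<le> fact m * (C * q) * ((1 + C ^ n * C ^ n) * (G ^ n * e)) ^ (m - 1)"
    using \<open>q > 0\<close> \<open>m \<ge> 1\<close> \<open>r \<noteq> 0\<close>
    by (intro abs_det_near_rank_one[where s = "\<lambda>i. q * r ^ c i" and v = "\<lambda>j. r ^ j"]) auto
  moreover have "C ^ n * C ^ n = C ^ (2 * n)"
    by (simp add: mult_2 power_add)
  ultimately show ?thesis
    unfolding G_def[symmetric] q_def by (simp add: power_mult_distrib mult_ac)
qed

theorem proposition4p3:
  fixes n m :: nat and C :: real
  assumes "n \<ge> 2" and "C \<ge> 1" and "1 \<le> m" and "m \<le> n + 1"
  shows "\<exists>C' > 0. \<forall>(lam::real) (p::nat \<Rightarrow> int) (c::nat \<Rightarrow> nat).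
           lam > 0
           \<and> p 0 \<ge> 1
           \<and> (\<forall>i\<le>n. real_of_int (p 0) / C \<le> real_of_int \<bar>p i\<bar>
                      \<and> real_of_int \<bar>p i\<bar> \<le> C * real_of_int (p 0))
           \<and> (\<forall>i\<in>{1..n-1}. real_of_int \<bar>p (i-1) * p (i+1) - (p i)^2\<bar>
                      \<le> C * real_of_int (p 0) powr (1 - lam))
           \<and> (\<forall>i<m. c i \<le> n + 1 - m)
           \<longrightarrow> real_of_int \<bar>det (mat m m (\<lambda>(i,j). p (c i + j)))\<bar>
                 \<le> C' * real_of_int (p 0) powr (1 - (real m - 1) * lam)"
proof -
  define C' where "C' = fact m * C * ((1 + C ^ (2 * n)) * (5 * C ^ (n + 1)) ^ n) ^ (m - 1)"
  have "C' > 0"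
    using \<open>C \<ge> 1\<close> by (simp add: C'_def add_pos_nonneg)
  moreover have "real_of_int \<bar>det (mat m m (\<lambda>(i, j). p (c i + j)))\<bar>
      \<le> C' * real_of_int (p 0) powr (1 - (real m - 1) * lam)"
    if "lam > 0" and "p 0 \<ge> 1"
      and bounds: "\<forall>i\<le>n. real_of_int (p 0) / C \<le> real_of_int \<bar>p i\<bar> \<and> real_of_int \<bar>p i\<bar> \<le> C * real_of_int (p 0)"
      and near_square: "\<forall>i\<in>{1..n-1}. real_of_int \<bar>p (i-1) * p (i+1) - (p i)^2\<bar> \<le> C * real_of_int (p 0) powr (1 - lam)"
      and shifts: "\<forall>i<m. c i \<le> n + 1 - m"
    for lam :: real and p :: "nat \<Rightarrow> int" and c :: "nat \<Rightarrow> nat"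
  proof -
    let ?q = "real_of_int (p 0)"
    have "?q > 0" using \<open>p 0 \<ge> 1\<close> by simp
    have "?q powr (1 - lam) = ?q * ?q powr (- lam)"
      using \<open>?q > 0\<close> by (simp add: powr_diff powr_minus divide_inverse)
    then have "\<bar>det (mat m m (\<lambda>(i, j). real_of_int (p (c i + j))))\<bar>
        \<le> C' * (?q * (?q powr (- lam)) ^ (m - 1))"
      unfolding C'_def using assms bounds near_square shifts \<open>?q > 0\<close>
      by (intro abs_det_shifted_rows_le) (auto simp: mult.assoc)
    moreover have "?q * (?q powr (- lam)) ^ (m - 1) = ?q powr 1 * ?q powr (- lam * (real m - 1))"
      using \<open>?q > 0\<close> \<open>m \<ge> 1\<close> by (simp add: powr_realpow[symmetric] powr_powr of_nat_diff)
    also have "\<dots> = ?q powr (1 - (real m - 1) * lam)"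
      by (subst powr_add[symmetric]) (simp add: algebra_simps)
    moreover have "mat m m (\<lambda>(i, j). real_of_int (p (c i + j)))
        = map_mat real_of_int (mat m m (\<lambda>(i, j). p (c i + j)))"
      by auto
    ultimately show ?thesis
      by simp
  qed
  ultimately show ?thesis by blast
qed

end
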